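(* Let $(X,d)$ be a complete metric space and $\ell:X\to[0,+\infty]$ a lower semicontinuous function with $\inf_X\ell=0$ satisfying hypothesis $(H_0)$. Then there exists a unique proper lower semicontinuous function $u:X\to[0,+\infty]$ with $\inf_Xu=0$ and $G[u](x)=\ell(x)$ for all $x\in X$.
   Context: Global slope: $G[u](x)=\sup_{y\neq x}\frac{(u(x)-u(y))_+}{d(x,y)}$ if $u(x)<+\infty$ and $G[u](x)=+\infty$ otherwise. Hypothesis $(H_0)$: there is a sequence $\{\bar x_n\}_n\subset X$ with $\sum_{n=0}^\infty\ell(\bar x_n)d(\bar x_n,\bar x_{n+1})<+\infty$ and $\lim_{n\to\infty}\ell(\bar x_n)=0$. Proper means not identically $+\infty$. *)

theory Defs
  imports "HOL-Analysis.Analysis"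
begin

definition lsc :: "('a::topological_space \<Rightarrow> ennreal) \<Rightarrow> bool" where
  "lsc f \<longleftrightarrow> (\<forall>t. closed {x. f x \<le> t})"

text \<open>Global slope. For ennreal, truncated subtraction gives the positive part
  (and u x - \<infinity> = 0 when u x is finite).\<close>
definition global_slope :: "('a::metric_space \<Rightarrow> ennreal) \<Rightarrow> 'a \<Rightarrow> ennreal" where
  "global_slope u x =
     (if u x < \<infinity> then (SUP y\<in>{y. y \<noteq> x}. (u x - u y) / ennreal (dist x y)) else \<infinity>)"

definition H0 :: "('a::metric_space \<Rightarrow> ennreal) \<Rightarrow> bool" where
  "H0 l \<longleftrightarrow> (\<exists>xb::nat \<Rightarrow> 'a.
      (\<Sum>n. l (xb n) * ennreal (dist (xb n) (xb (Suc n)))) < \<infinity> \<and>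
      (\<lambda>n. l (xb n)) \<longlonglongrightarrow> 0)"

definition proper :: "('a \<Rightarrow> ennreal) \<Rightarrow> bool" where
  "proper u \<longleftrightarrow> (\<exists>x. u x \<noteq> \<infinity>)"

end

theory Submission
  imports Defs
begin

text \<open>
  Uniqueness is a comparison principle: if \<open>f\<close> and \<open>g\<close> are lower semicontinuous,
  \<open>inf f = 0\<close> and the global slope of \<open>f\<close> is dominated by that of \<open>g\<close>, then \<open>f \<le> g\<close>.
  Starting from \<open>x\<close>, Ekeland's variational principle with parameters
  \<open>lam k = lam0 / (1 + eps) ^ k\<close> produces a chain along which \<open>g\<close> drops by at least
  \<open>lam k\<close> times the step length and the slopes of \<open>g\<close>, hence of \<open>f\<close>, are at most \<open>lam k\<close>.
  Telescoping the slope inequality of \<open>f\<close> along the chain bounds \<open>f\<close> at its first point by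
  \<open>(1 + eps) * g x\<close> plus the values of \<open>f\<close> far out on the chain, and these tend to \<open>0\<close>.
  Letting \<open>lam0 \<longrightarrow> \<infinity>\<close> and using lower semicontinuity of \<open>f\<close> at \<open>x\<close> gives \<open>f x \<le> g x\<close>.

  For existence, let \<open>T x\<close> be the infimal cost \<open>\<Sum>n. l (x n) * dist (x n) (x (Suc n))\<close> of
  paths starting at \<open>x\<close> along which \<open>l\<close> tends to \<open>0\<close>, and let \<open>u\<close> be the lower
  semicontinuous envelope of \<open>T\<close>. Hypothesis (H0) makes \<open>u\<close> finite wherever \<open>l\<close> is and
  gives \<open>inf u = 0\<close>. The one-step inequality \<open>T x \<le> l x * dist x y + T y\<close> yields
  \<open>G[u] \<le> l\<close>; conversely, following an almost optimal path from near \<open>x\<close> until \<open>l\<close> first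
  drops below a level \<open>c < l x\<close> shows \<open>G[u] x \<ge> c\<close>.
\<close>

lemma ennreal_minus_divide:
  assumes "0 \<le> a" "0 \<le> b" "0 < d"
  shows "(ennreal a - ennreal b) / ennreal d = ennreal (max 0 (a - b) / d)"
  using assms by (simp add: ennreal_minus max_def ennreal_neg divide_ennreal)

lemma ennreal_le_add_iff:
  "0 \<le> a \<Longrightarrow> 0 \<le> b \<Longrightarrow> ennreal d \<le> ennreal a + ennreal b \<longleftrightarrow> d \<le> a + b"
  by (simp flip: ennreal_plus)

lemma ennreal_add_less_iff:
  "0 \<le> a \<Longrightarrow> 0 \<le> b \<Longrightarrow> ennreal a + ennreal b < ennreal c \<longleftrightarrow> a + b < c"
  by (simp add: ennreal_less_iff flip: ennreal_plus)

lemma global_slope_top: "u x = \<infinity> \<Longrightarrow> global_slope u x = \<infinity>"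
  by (simp add: global_slope_def)

lemma global_slope_ge:
  assumes "u x = ennreal a" "u y = ennreal b" "0 \<le> a" "0 \<le> b" "y \<noteq> x" "0 \<le> c"
    and "c * dist x y \<le> a - b"
  shows "ennreal c \<le> global_slope u x"
proof -
  have d: "0 < dist x y" using \<open>y \<noteq> x\<close> by simp
  have "c \<le> max 0 (a - b) / dist x y" using assms(7) d by (simp add: field_simps)
  then have "ennreal c \<le> (u x - u y) / ennreal (dist x y)"
    using assms(1-4) d by (simp add: ennreal_minus_divide ennreal_leI)
  also have "\<dots> \<le> global_slope u x"
    unfolding global_slope_def using assms(1,5) by (auto intro!: SUP_upper)
  finally show ?thesis .
qed

lemma global_slope_le_iff:
  assumes "u x \<noteq> \<infinity>" "0 \<le> c"
  shows "global_slope u x \<le> ennreal c \<longleftrightarrow> (\<forall>y. u x \<le> u y + ennreal (c * dist x y))"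
proof -
  obtain a where a: "u x = ennreal a" "0 \<le> a" using assms(1) by (cases "u x") auto
  have "(u x - u y) / ennreal (dist x y) \<le> ennreal c \<longleftrightarrow> u x \<le> u y + ennreal (c * dist x y)"
    if "y \<noteq> x" for y
  proof (cases "u y")
    case (real b)
    have d: "0 < dist x y" using that by simp
    have "(u x - u y) / ennreal (dist x y) \<le> ennreal c \<longleftrightarrow> max 0 (a - b) / dist x y \<le> c"
      using a real d assms(2) by (simp add: ennreal_minus_divide)
    also have "\<dots> \<longleftrightarrow> a \<le> b + c * dist x y"
      using d assms(2) by (auto simp: field_simps)
    also have "\<dots> \<longleftrightarrow> u x \<le> u y + ennreal (c * dist x y)"
      using a real d assms(2) by (simp add: ennreal_plus[symmetric] del: ennreal_plus)
    finally show ?thesis .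
  qed (use a in simp)
  then show ?thesis
    unfolding global_slope_def using assms(1)
    by (auto simp: less_top SUP_le_iff) (metis add_increasing2 order_refl zero_le)
qed

section \<open>Ekeland's variational principle\<close>

lemma lsc_add_continuous:
  fixes g :: "'a::metric_space \<Rightarrow> ennreal"
  assumes "lsc g" "continuous_on UNIV h" "\<And>x. 0 \<le> h x"
  shows "lsc (\<lambda>x. g x + ennreal (h x))"
  unfolding lsc_def closed_sequential_limits
proof (intro allI impI, elim conjE)
  fix t xs x
  assume le_t: "\<forall>n. xs n \<in> {x. g x + ennreal (h x) \<le> t}" and lim: "xs \<longlonglongrightarrow> x"
  have h_lim: "(\<lambda>n. h (xs n)) \<longlonglongrightarrow> h x"
    using continuous_on_tendsto_compose[OF assms(2) lim] by simp
  show "x \<in> {x. g x + ennreal (h x) \<le> t}"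
  proof (simp, rule ennreal_le_epsilon)
    fix e :: real assume "t < top" "0 < e"
    have "(\<lambda>n. h (xs n) + e) \<longlonglongrightarrow> h x + e"
      using h_lim by (intro tendsto_add tendsto_const)
    then have ev: "\<forall>\<^sub>F n in sequentially. h x < h (xs n) + e"
      using \<open>0 < e\<close> by (intro order_tendstoD(1)) auto
    have le_te: "g (xs n) + ennreal (h x) \<le> t + ennreal e" if "h x < h (xs n) + e" for n
    proof -
      have "ennreal (h x) \<le> ennreal (h (xs n)) + ennreal e"
        using that assms(3) \<open>0 < e\<close> by (simp flip: ennreal_plus)
      then have "g (xs n) + ennreal (h x) \<le> g (xs n) + ennreal (h (xs n)) + ennreal e"
        by (simp add: add.assoc add_left_mono)
      also have "\<dots> \<le> t + ennreal e" using le_t by (simp add: add_right_mono)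
      finally show ?thesis .
    qed
    obtain n where "h x < h (xs n) + e" using ev by (auto simp: eventually_sequentially)
    then have h_le: "ennreal (h x) \<le> t + ennreal e"
      using le_te[of n] by (meson add_increasing order.trans order_refl zero_le)
    have "\<forall>\<^sub>F n in sequentially. xs n \<in> {w. g w \<le> t + ennreal e - ennreal (h x)}"
      using ev by eventually_elim (simp add: ennreal_le_minus_iff le_te)
    then have "g x \<le> t + ennreal e - ennreal (h x)"
      using Lim_in_closed_set[OF _ _ sequentially_bot lim] assms(1) unfolding lsc_def by blast
    then show "g x + ennreal (h x) \<le> t + ennreal e"
      using h_le by (auto simp: ennreal_le_minus_iff)
  qed
qed

lemma lsc_le_if_approachable:
  assumes "lsc f" "\<And>e. 0 < e \<Longrightarrow> \<exists>y. dist y x < e \<and> f y \<le> t"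
  shows "f x \<le> t"
  using closed_approachable[of "{x. f x \<le> t}" x] assms unfolding lsc_def by auto

definition ekeland_set :: "('a::metric_space \<Rightarrow> ennreal) \<Rightarrow> real \<Rightarrow> 'a \<Rightarrow> 'a set" where
  "ekeland_set g lam y = {w. g w + ennreal (lam * dist w y) \<le> g y}"

lemma ekeland_set_refl: "y \<in> ekeland_set g lam y"
  by (simp add: ekeland_set_def)

lemma ekeland_set_trans:
  assumes "w \<in> ekeland_set g lam v" "v \<in> ekeland_set g lam y" "0 \<le> lam"
  shows "w \<in> ekeland_set g lam y"
proof -
  have "lam * dist w y \<le> lam * dist w v + lam * dist v y"
    using mult_left_mono[OF dist_triangle[of w y v] \<open>0 \<le> lam\<close>] by (simp add: distrib_left)
  then have "ennreal (lam * dist w y) \<le> ennreal (lam * dist w v) + ennreal (lam * dist v y)"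
    using \<open>0 \<le> lam\<close> by (simp flip: ennreal_plus)
  then have "g w + ennreal (lam * dist w y) \<le> g w + ennreal (lam * dist w v) + ennreal (lam * dist v y)"
    by (simp add: add.assoc add_left_mono)
  also have "\<dots> \<le> g v + ennreal (lam * dist v y)"
    using assms(1) by (intro add_right_mono) (simp add: ekeland_set_def)
  also have "\<dots> \<le> g y"
    using assms(2) by (simp add: ekeland_set_def)
  finally show ?thesis by (simp add: ekeland_set_def)
qed

lemma closed_ekeland_set:
  assumes "lsc g" "0 \<le> lam"
  shows "closed (ekeland_set g lam y)"
proof -
  have "lsc (\<lambda>w. g w + ennreal (lam * dist w y))"
    using assms by (intro lsc_add_continuous) (auto intro!: continuous_intros)
  then show ?thesis unfolding lsc_def ekeland_set_def by blast
qed

lemma ekeland_set_small: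
  assumes "w \<in> ekeland_set g lam v" "v \<in> ekeland_set g lam y" "g w \<noteq> \<infinity>"
    and "g v < (INF u\<in>ekeland_set g lam y. g u) + ennreal e" "0 \<le> lam" "0 \<le> e"
  shows "lam * dist w v < e"
proof -
  have "g w + ennreal (lam * dist w v) \<le> g v"
    using assms(1) by (simp add: ekeland_set_def)
  also have "\<dots> < (INF u\<in>ekeland_set g lam y. g u) + ennreal e" by fact
  also have "\<dots> \<le> g w + ennreal e"
    using ekeland_set_trans[OF assms(1,2,5)] by (intro add_right_mono INF_lower)
  finally show ?thesis
    using assms(3,5) by (simp add: ennreal_add_left_cancel_less ennreal_less_iff)
qed

lemma ekeland_sequence:
  fixes g :: "'a::metric_space \<Rightarrow> ennreal"
  assumes "g x \<noteq> \<infinity>" "0 \<le> lam"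
  obtains ys where "\<And>n. ys n \<in> ekeland_set g lam x" "\<And>n. ys (Suc n) \<in> ekeland_set g lam (ys n)"
    and "\<And>w n. w \<in> ekeland_set g lam (ys (Suc n)) \<Longrightarrow> lam * dist w (ys (Suc n)) < (1/2)^n"
proof -
  let ?S = "ekeland_set g lam"
  have near_inf: "\<exists>w \<in> ?S y. g w < (INF u\<in>?S y. g u) + ennreal ((1/2)^n)"
    if "y \<in> ?S x" for y n
  proof -
    have "g y \<noteq> \<infinity>"
      using that assms(1) by (auto simp: ekeland_set_def top_unique)
    then have "(INF u\<in>?S y. g u) \<noteq> \<infinity>"
      using ekeland_set_refl[of y g lam] by auto
    then show ?thesis
      by (subst INF_less_iff[symmetric]) (simp add: ennreal_add_left_cancel_less[of _ 0, simplified])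
  qed
  have "\<exists>ys. \<forall>n. ys n \<in> ?S x \<and> ys (Suc n) \<in> ?S (ys n) \<and>
      g (ys (Suc n)) < (INF u\<in>?S (ys n). g u) + ennreal ((1/2)^n)"
  proof (rule dependent_nat_choice[where P = "\<lambda>n y. y \<in> ?S x"])
    fix y n assume "y \<in> ?S x"
    then show "\<exists>w. w \<in> ?S x \<and> w \<in> ?S y \<and> g w < (INF u\<in>?S y. g u) + ennreal ((1/2)^n)"
      using near_inf ekeland_set_trans assms(2) by meson
  qed (use ekeland_set_refl in blast)
  then obtain ys where ys_S: "\<And>n. ys n \<in> ?S x" and ys_next: "\<And>n. ys (Suc n) \<in> ?S (ys n)"
    and ys_inf: "\<And>n. g (ys (Suc n)) < (INF u\<in>?S (ys n). g u) + ennreal ((1/2)^n)"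
    by blast
  have "lam * dist w (ys (Suc n)) < (1/2)^n" if "w \<in> ?S (ys (Suc n))" for w n
  proof -
    have "g w \<noteq> \<infinity>"
      using ekeland_set_trans[OF that ys_S assms(2)] assms(1) by (auto simp: ekeland_set_def top_unique)
    then show ?thesis
      using ekeland_set_small[OF that ys_next _ ys_inf assms(2)] by simp
  qed
  with ys_S ys_next show thesis
    by (rule that)
qed

text \<open>The sets \<open>ekeland_set g lam (ys n)\<close> are closed and nested, and their diameters tend to 0
  because \<open>ys (Suc n)\<close> almost minimises \<open>g\<close> on the previous set; Cantor's intersection theorem
  gives the point \<open>z\<close>.\<close>

theorem ekeland_variational_principle:
  fixes g :: "'a::complete_space \<Rightarrow> ennreal"
  assumes "lsc g" "g x \<noteq> \<infinity>" "0 < lam"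
  obtains z where "g z + ennreal (lam * dist z x) \<le> g x"
    and "\<And>y. y \<noteq> z \<Longrightarrow> g z < g y + ennreal (lam * dist y z)"
proof -
  let ?S = "ekeland_set g lam"
  have "0 \<le> lam"
    using assms(3) by simp
  obtain ys where ys_S: "\<And>n. ys n \<in> ?S x" and ys_next: "\<And>n. ys (Suc n) \<in> ?S (ys n)"
    and small: "\<And>w n. w \<in> ?S (ys (Suc n)) \<Longrightarrow> lam * dist w (ys (Suc n)) < (1/2)^n"
    using ekeland_sequence[of g x lam] assms(2) \<open>0 \<le> lam\<close> by blast
  have nested: "?S (ys n) \<subseteq> ?S (ys m)" if "m \<le> n" for m n
    using lift_Suc_antimono_le[of "\<lambda>n. ?S (ys n)", OF _ that]
      ekeland_set_trans[OF _ ys_next \<open>0 \<le> lam\<close>] by blast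
  have "\<exists>n. \<forall>v\<in>?S (ys n). \<forall>w\<in>?S (ys n). dist v w < e" if e: "0 < e" for e
  proof -
    obtain n where n: "(1/2::real)^n < lam * e / 2"
      using real_arch_pow_inv[of "lam * e / 2" "1/2"] e assms(3) by auto
    have "dist v w < e" if "v \<in> ?S (ys (Suc n))" "w \<in> ?S (ys (Suc n))" for v w
    proof -
      have "lam * (dist v (ys (Suc n)) + dist w (ys (Suc n))) < lam * e"
        using small[OF that(1)] small[OF that(2)] n by (simp add: distrib_left)
      then show ?thesis
        using dist_triangle2[of v w "ys (Suc n)"] assms(3) by simp
    qed
    then show ?thesis by blast
  qed
  then obtain z where z: "\<Inter> (range (\<lambda>n. ?S (ys n))) = {z}"
    using decreasing_closed_nest_sing[of "\<lambda>n. ?S (ys n)"] closed_ekeland_set[OF assms(1) \<open>0 \<le> lam\<close>]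
      ekeland_set_refl nested by (metis empty_iff)
  show thesis
  proof
    have "z \<in> ?S x"
      using z ekeland_set_trans[OF _ ys_S \<open>0 \<le> lam\<close>] by auto
    then show "g z + ennreal (lam * dist z x) \<le> g x"
      by (simp add: ekeland_set_def)
    fix y assume "y \<noteq> z"
    have "y \<notin> ?S z"
      using z ekeland_set_trans[of y g lam z] \<open>0 \<le> lam\<close> \<open>y \<noteq> z\<close> by auto
    then show "g z < g y + ennreal (lam * dist y z)"
      by (simp add: ekeland_set_def not_le)
  qed
qed

corollary ekeland_slope:
  fixes g :: "'a::complete_space \<Rightarrow> ennreal"
  assumes "lsc g" "g x \<noteq> \<infinity>" "0 < lam"
  obtains z where "g z + ennreal (lam * dist z x) \<le> g x" "global_slope g z \<le> ennreal lam"
proof -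
  obtain z where z: "g z + ennreal (lam * dist z x) \<le> g x"
    and strict: "\<And>y. y \<noteq> z \<Longrightarrow> g z < g y + ennreal (lam * dist y z)"
    using ekeland_variational_principle[OF assms] by blast
  have "g z \<noteq> \<infinity>"
    using z assms(2) by (auto simp: top_unique)
  moreover have "g z \<le> g y + ennreal (lam * dist z y)" for y
    using strict[of y] by (cases "y = z") (auto simp: dist_commute)
  ultimately have "global_slope g z \<le> ennreal lam"
    using global_slope_le_iff[of g z lam] assms(3) by simp
  with z show thesis by (rule that)
qed

lemma ekeland_descent_sequence:
  fixes g :: "'a::complete_space \<Rightarrow> ennreal"
  assumes "lsc g" "g x \<noteq> \<infinity>" "\<And>k. 0 < lam k"
  obtains a where "a 0 = x"
    and "\<And>k. g (a (Suc k)) + ennreal (lam k * dist (a (Suc k)) (a k)) \<le> g (a k)"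
    and "\<And>k. global_slope g (a (Suc k)) \<le> ennreal (lam k)"
proof -
  have "\<exists>a. \<forall>k. (g (a k) \<noteq> \<infinity> \<and> (k = 0 \<longrightarrow> a k = x)) \<and>
      g (a (Suc k)) + ennreal (lam k * dist (a (Suc k)) (a k)) \<le> g (a k) \<and>
      global_slope g (a (Suc k)) \<le> ennreal (lam k)"
  proof (rule dependent_nat_choice)
    fix y and k :: nat assume "g y \<noteq> \<infinity> \<and> (k = 0 \<longrightarrow> y = x)"
    then obtain z where "g z + ennreal (lam k * dist z y) \<le> g y" "global_slope g z \<le> ennreal (lam k)"
      using ekeland_slope[OF assms(1) _ assms(3)] by blast
    moreover have "g z \<noteq> \<infinity>"
      using calculation(1) \<open>g y \<noteq> \<infinity> \<and> _\<close> by (auto simp: top_unique)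
    ultimately show "\<exists>z. (g z \<noteq> \<infinity> \<and> (Suc k = 0 \<longrightarrow> z = x)) \<and>
        g z + ennreal (lam k * dist z y) \<le> g y \<and> global_slope g z \<le> ennreal (lam k)"
      by blast
  qed (use assms(2) in blast)
  then show thesis
    using that by blast
qed

section \<open>Comparison principle\<close>

lemma le_mult_exp_sum:
  fixes r e :: "nat \<Rightarrow> real"
  assumes "\<And>n. r (Suc n) \<le> r n * (1 + e n)" "\<And>n. 0 \<le> r n" "\<And>n. 0 \<le> e n"
  shows "r n \<le> r 0 * exp (\<Sum>k<n. e k)"
proof (induction n)
  case (Suc n)
  have "r (Suc n) \<le> r n * (1 + e n)" by (fact assms(1))
  also have "\<dots> \<le> r 0 * exp (\<Sum>k<n. e k) * exp (e n)"
    using Suc.IH assms(2,3) by (intro mult_mono) auto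
  finally show ?case by (simp add: exp_add mult.assoc)
qed simp

lemma chain_dist_bounded:
  fixes b :: "nat \<Rightarrow> 'a::metric_space"
  assumes "\<And>k. 0 \<le> lam k" "\<And>n. (\<Sum>k<n. lam k * dist (b k) (b (Suc k))) \<le> B"
    and "0 < c" "\<And>n. c < lam n * dist (b n) m"
  shows "dist (b n) m \<le> dist (b 0) m * exp (B / c)"
proof -
  define e where "e k = lam k * dist (b k) (b (Suc k)) / c" for k
  have "dist (b (Suc n)) m \<le> dist (b n) m * (1 + e n)" for n
  proof -
    have one: "1 \<le> lam n * dist (b n) m / c"
      using assms(3) assms(4)[of n] by (simp add: le_divide_eq)
    then have "dist (b n) (b (Suc n)) \<le> lam n * dist (b n) m / c * dist (b n) (b (Suc n))"
      using mult_right_mono[OF one zero_le_dist[of "b n" "b (Suc n)"]] by simp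
    then show ?thesis
      using dist_triangle[of "b (Suc n)" m "b n"] by (simp add: e_def dist_commute algebra_simps)
  qed
  then have "dist (b n) m \<le> dist (b 0) m * exp (\<Sum>k<n. e k)"
    using assms(1,3) by (intro le_mult_exp_sum) (auto simp: e_def)
  also have "\<dots> \<le> dist (b 0) m * exp (B / c)"
  proof -
    have "(\<Sum>k<n. e k) \<le> B / c"
      using assms(2)[of n] \<open>0 < c\<close> by (simp add: e_def divide_right_mono flip: sum_divide_distrib)
    then show ?thesis
      by (intro mult_left_mono) auto
  qed
  finally show ?thesis .
qed

text \<open>If \<open>f\<close> stayed above \<open>\<delta>\<close> along the chain, then for a point \<open>m\<close> with \<open>f m < \<delta> / 2\<close>
  the slope inequality would force \<open>lam n * dist (b n) m > \<delta> / 2\<close>, so these distances would blow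
  up as \<open>lam n \<longrightarrow> 0\<close>; but a chain of finite \<open>lam\<close>-length keeps them bounded.\<close>

lemma slope_chain_reaches_zero:
  fixes f :: "'a::metric_space \<Rightarrow> ennreal"
  assumes inf: "(INF x. f x) = 0" and lam: "lam \<longlonglongrightarrow> 0" "\<And>k. 0 < lam k"
    and len: "\<And>n. (\<Sum>k<n. lam k * dist (b k) (b (Suc k))) \<le> B"
    and slope: "\<And>k y. f (b k) \<le> f y + ennreal (lam k * dist (b k) y)"
    and "0 < \<delta>"
  shows "\<exists>n. f (b n) < ennreal \<delta>"
proof (rule ccontr)
  assume "\<not> ?thesis"
  then have big: "ennreal \<delta> \<le> f (b n)" for n
    by (simp add: not_less)
  have "(INF x. f x) < ennreal (\<delta> / 2)"
    using inf \<open>0 < \<delta>\<close> by simp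
  then obtain m where "f m < ennreal (\<delta> / 2)"
    by (auto simp: INF_less_iff)
  then obtain fm where fm: "f m = ennreal fm" "0 \<le> fm" "fm < \<delta> / 2"
    by (cases "f m") (auto simp: ennreal_less_iff)
  have far: "\<delta> / 2 < lam n * dist (b n) m" for n
  proof -
    have "ennreal \<delta> \<le> ennreal fm + ennreal (lam n * dist (b n) m)"
      using order_trans[OF big[of n] slope[of n m]] fm(1) by simp
    then show ?thesis
      using fm lam(2)[of n] by (simp add: ennreal_le_add_iff)
  qed
  define R where "R = dist (b 0) m * exp (B / (\<delta> / 2))"
  have bounded: "dist (b n) m \<le> R" for n
    unfolding R_def using lam(2) len far \<open>0 < \<delta>\<close>
    by (intro chain_dist_bounded[of lam]) (auto simp: less_imp_le)
  have "\<forall>\<^sub>F n in sequentially. lam n * R < \<delta> / 2"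
    using tendsto_mult_left_zero[OF lam(1), where c = R] \<open>0 < \<delta>\<close> by (intro order_tendstoD(2)) auto
  then obtain n where "lam n * R < \<delta> / 2"
    by (auto simp: eventually_sequentially)
  moreover have "lam n * dist (b n) m \<le> lam n * R"
    using bounded[of n] lam(2)[of n] by (simp add: mult_left_mono)
  ultimately show False
    using far[of n] by linarith
qed

lemma slope_chain_bound:
  fixes f :: "'a::metric_space \<Rightarrow> ennreal"
  assumes inf: "(INF x. f x) = 0" and lam: "lam \<longlonglongrightarrow> 0" "\<And>k. 0 < lam k"
    and len: "\<And>n. (\<Sum>k<n. lam k * dist (b k) (b (Suc k))) \<le> B"
    and slope: "\<And>k y. f (b k) \<le> f y + ennreal (lam k * dist (b k) y)"
  shows "f (b 0) \<le> ennreal B"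
proof (rule ennreal_le_epsilon)
  fix \<delta> :: real assume "0 < \<delta>"
  then obtain n where n: "f (b n) < ennreal \<delta>"
    using slope_chain_reaches_zero[OF assms] by blast
  have telescope: "f (b 0) \<le> f (b n) + ennreal (\<Sum>k<n. lam k * dist (b k) (b (Suc k)))" for n
  proof (induction n)
    case (Suc n)
    have "f (b 0) \<le> f (b (Suc n)) + ennreal (lam n * dist (b n) (b (Suc n)))
        + ennreal (\<Sum>k<n. lam k * dist (b k) (b (Suc k)))"
      using Suc.IH slope[of n "b (Suc n)"] by (meson add_right_mono order_trans)
    then show ?case
      using lam(2) by (simp add: sum_nonneg less_imp_le ac_simps)
  qed simp
  have "0 \<le> B"
    using len[of 0] by simp
  have "f (b 0) \<le> f (b n) + ennreal B"
    using telescope[of n] len[of n] by (meson add_left_mono ennreal_leI order_trans)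
  also have "\<dots> \<le> ennreal B + ennreal \<delta>"
    using n by (simp add: add.commute add_right_mono less_imp_le)
  finally show "f (b 0) \<le> ennreal B + ennreal \<delta>" .
qed

lemma descent_sequence_length:
  fixes g :: "'a::metric_space \<Rightarrow> ennreal"
  assumes "\<And>k. g (a (Suc k)) + ennreal (mu k * dist (a (Suc k)) (a k)) \<le> g (a k)"
    and "g (a 0) \<le> ennreal c" "0 \<le> c" "\<And>k. 0 \<le> mu k"
  shows "(\<Sum>k<n. mu k * dist (a (Suc k)) (a k)) \<le> c"
proof -
  have "g (a n) + ennreal (\<Sum>k<n. mu k * dist (a (Suc k)) (a k)) \<le> g (a 0)"
  proof (induction n)
    case (Suc n)
    have "ennreal (\<Sum>k<Suc n. mu k * dist (a (Suc k)) (a k))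
        = ennreal (mu n * dist (a (Suc n)) (a n)) + ennreal (\<Sum>k<n. mu k * dist (a (Suc k)) (a k))"
      using assms(4) by (simp add: sum_nonneg)
    then have "g (a (Suc n)) + ennreal (\<Sum>k<Suc n. mu k * dist (a (Suc k)) (a k))
        = g (a (Suc n)) + ennreal (mu n * dist (a (Suc n)) (a n))
          + ennreal (\<Sum>k<n. mu k * dist (a (Suc k)) (a k))"
      by (simp add: add.assoc)
    also have "\<dots> \<le> g (a n) + ennreal (\<Sum>k<n. mu k * dist (a (Suc k)) (a k))"
      using assms(1) by (rule add_right_mono)
    finally show ?case
      using Suc.IH by (rule order_trans)
  qed simp
  then have "ennreal (\<Sum>k<n. mu k * dist (a (Suc k)) (a k)) \<le> ennreal c"
    using add_increasing[OF zero_le order_refl] assms(2) by (meson order_trans)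
  then show ?thesis
    using assms(3) by simp
qed

lemma global_slope_le_ennrealD:
  assumes "global_slope u x \<le> ennreal c" "0 \<le> c"
  shows "u x \<le> u y + ennreal (c * dist x y)"
proof -
  have "u x \<noteq> \<infinity>"
    using assms(1) global_slope_top[of u x] by (auto simp: top_unique)
  then show ?thesis
    using assms global_slope_le_iff by blast
qed

lemma slope_comparison_approx:
  fixes f g :: "'a::complete_space \<Rightarrow> ennreal"
  assumes "lsc g" "(INF y. f y) = 0" "\<And>y. global_slope f y \<le> global_slope g y"
    and gx: "g x = ennreal c" "0 \<le> c" and "0 < eps" "0 < lam0"
  shows "\<exists>z. lam0 * dist z x \<le> c \<and> f z \<le> ennreal ((1 + eps) * c)"
proof -
  define lam where "lam k = lam0 / (1 + eps) ^ k" for k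
  have lam_pos: "0 < lam k" for k
    using \<open>0 < eps\<close> \<open>0 < lam0\<close> by (simp add: lam_def)
  obtain a where "a 0 = x"
    and descent: "\<And>k. g (a (Suc k)) + ennreal (lam k * dist (a (Suc k)) (a k)) \<le> g (a k)"
    and slope_g: "\<And>k. global_slope g (a (Suc k)) \<le> ennreal (lam k)"
    using ekeland_descent_sequence[of g x lam] assms(1) gx lam_pos by auto
  have "g (a 1) \<le> g (a 0)"
    using order_trans[OF add_increasing2[OF zero_le order_refl] descent[of 0]] by simp
  then have "(\<Sum>k<n. lam (Suc k) * dist (a (Suc (Suc k))) (a (Suc k))) \<le> c" for n
    using descent lam_pos gx \<open>a 0 = x\<close> by (intro descent_sequence_length[where g = g]) (simp_all add: less_imp_le)
  moreover have shift: "lam k * dist (a (Suc k)) (a (Suc (Suc k)))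
      = (1 + eps) * (lam (Suc k) * dist (a (Suc (Suc k))) (a (Suc k)))" for k
    using \<open>0 < eps\<close> by (simp add: lam_def dist_commute divide_simps)
  ultimately have len: "(\<Sum>k<n. lam k * dist (a (Suc k)) (a (Suc (Suc k)))) \<le> (1 + eps) * c" for n
    using \<open>0 < eps\<close> by (simp only: shift flip: sum_distrib_left) (simp add: mult_left_mono)
  have slope_f: "f (a (Suc k)) \<le> f y + ennreal (lam k * dist (a (Suc k)) y)" for k y
    by (rule global_slope_le_ennrealD[OF order_trans[OF assms(3) slope_g[of k]] less_imp_le[OF lam_pos[of k]]])
  have "lam \<longlonglongrightarrow> 0"
    unfolding lam_def using \<open>0 < eps\<close> by (intro LIMSEQ_divide_realpow_zero) simp
  then have "f (a 1) \<le> ennreal ((1 + eps) * c)"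
    using slope_chain_bound[of f lam "\<lambda>k. a (Suc k)", OF assms(2) _ lam_pos len slope_f] by simp
  moreover have "lam0 * dist (a 1) x \<le> c"
    using descent_sequence_length[of g a lam c 1] descent gx \<open>a 0 = x\<close> lam_pos
    by (simp add: lam_def less_imp_le)
  ultimately show ?thesis
    by blast
qed

lemma slope_comparison:
  fixes f g :: "'a::complete_space \<Rightarrow> ennreal"
  assumes "lsc f" "lsc g" "(INF y. f y) = 0" "\<And>y. global_slope f y \<le> global_slope g y"
  shows "f x \<le> g x"
proof (cases "g x")
  case (real c)
  have approx: "f x \<le> ennreal ((1 + eps) * c)" if "0 < eps" for eps
  proof (rule lsc_le_if_approachable[OF assms(1)])
    fix e :: real assume "0 < e"
    then obtain z where z: "(c + 1) / e * dist z x \<le> c" "f z \<le> ennreal ((1 + eps) * c)"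
      using slope_comparison_approx[OF assms(2-4) real(2,1) \<open>0 < eps\<close>, of "(c + 1) / e"] real(1)
      by auto
    have "(c + 1) * dist z x \<le> c * e"
      using z(1) \<open>0 < e\<close> by (simp add: field_simps)
    also have "\<dots> < (c + 1) * e"
      using \<open>0 < e\<close> by simp
    finally have "dist z x < e"
      using real(1) by simp
    then show "\<exists>z. dist z x < e \<and> f z \<le> ennreal ((1 + eps) * c)"
      using z(2) by blast
  qed
  show ?thesis
  proof (rule ennreal_le_epsilon)
    fix e :: real assume "0 < e"
    then have "(1 + e / (c + 1)) * c \<le> c + e"
      using real(1) by (simp add: field_simps)
    then have "f x \<le> ennreal (c + e)"
      using approx[of "e / (c + 1)"] \<open>0 < e\<close> real(1) by (metis order_trans ennreal_leI divide_pos_pos add_nonneg_pos zero_less_one)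
    then show "f x \<le> g x + ennreal e"
      using real \<open>0 < e\<close> by simp
  qed
qed simp

lemma slope_determines_function:
  fixes u v :: "'a::complete_space \<Rightarrow> ennreal"
  assumes "lsc u" "lsc v" "(INF x. u x) = 0" "(INF x. v x) = 0"
    and "\<And>x. global_slope u x = global_slope v x"
  shows "u = v"
proof
  fix x
  show "u x = v x"
    using slope_comparison[of u v x] slope_comparison[of v u x] assms by (simp add: order_antisym)
qed

section \<open>Construction of the solution\<close>

definition lsc_envelope :: "('a::metric_space \<Rightarrow> ennreal) \<Rightarrow> 'a \<Rightarrow> ennreal" where
  "lsc_envelope h x = (SUP r\<in>{0<..}. INF y\<in>ball x r. h y)"

lemma lsc_envelope_le: "lsc_envelope h x \<le> h x"
  unfolding lsc_envelope_def by (intro SUP_least INF_lower) auto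

lemma INF_ball_le_lsc_envelope: "0 < r \<Longrightarrow> (INF y\<in>ball x r. h y) \<le> lsc_envelope h x"
  unfolding lsc_envelope_def by (intro SUP_upper) auto

lemma lsc_lsc_envelope: "lsc (lsc_envelope h)"
  unfolding lsc_def
proof
  fix t
  have "x \<in> {x. lsc_envelope h x \<le> t}" if "x \<in> closure {x. lsc_envelope h x \<le> t}" for x
  proof -
    have "(INF y\<in>ball x r. h y) \<le> t" if "0 < r" for r
    proof -
      obtain y where y: "lsc_envelope h y \<le> t" "dist y x < r / 2"
        using \<open>x \<in> closure _\<close> \<open>0 < r\<close> unfolding closure_approachable
        by (metis (no_types, lifting) half_gt_zero mem_Collect_eq)
      have "ball y (r / 2) \<subseteq> ball x r"
      proof
        fix w assume "w \<in> ball y (r / 2)"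
        then show "w \<in> ball x r"
          using y(2) dist_triangle[of x w y] by (simp add: dist_commute)
      qed
      then have "(INF w\<in>ball x r. h w) \<le> (INF w\<in>ball y (r / 2). h w)"
        by (rule INF_superset_mono) simp
      also have "\<dots> \<le> lsc_envelope h y"
        using \<open>0 < r\<close> by (intro INF_ball_le_lsc_envelope) simp
      finally show ?thesis
        using y(1) by simp
    qed
    then show ?thesis
      unfolding lsc_envelope_def by (auto intro: SUP_least)
  qed
  then show "closed {x. lsc_envelope h x \<le> t}"
    by (metis closure_subset_eq subsetI)
qed

lemma lsc_envelope_le_add_dist:
  assumes "\<And>y. h x \<le> h y + ennreal (c * dist x y)" "0 \<le> c"
  shows "lsc_envelope h x \<le> lsc_envelope h z + ennreal (c * dist x z)"
proof (rule ennreal_le_epsilon)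
  fix e :: real
  assume fin: "lsc_envelope h z + ennreal (c * dist x z) < top" and "0 < e"
  define r where "r = e / (2 * (c + 1))"
  have "0 < r" "c * r \<le> e / 2"
    using \<open>0 < e\<close> \<open>0 \<le> c\<close> by (auto simp: r_def field_simps)
  have "lsc_envelope h z < lsc_envelope h z + ennreal (e / 2)"
    using fin \<open>0 < e\<close> by (simp add: ennreal_add_left_cancel_less[of _ 0, simplified])
  then have "(INF y\<in>ball z r. h y) < lsc_envelope h z + ennreal (e / 2)"
    using INF_ball_le_lsc_envelope[OF \<open>0 < r\<close>] by (rule le_less_trans[rotated])
  then obtain y where y: "dist z y < r" "h y < lsc_envelope h z + ennreal (e / 2)"
    by (auto simp: INF_less_iff)
  have "c * dist x y \<le> c * (dist x z + r)"
    using dist_triangle[of x y z] y(1) \<open>0 \<le> c\<close> by (intro mult_left_mono) auto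
  then have "c * dist x y \<le> c * dist x z + e / 2"
    using \<open>c * r \<le> e / 2\<close> by (simp add: distrib_left)
  then have dist_le: "ennreal (c * dist x y) \<le> ennreal (c * dist x z) + ennreal (e / 2)"
    using \<open>0 \<le> c\<close> \<open>0 < e\<close> by (simp flip: ennreal_plus)
  have "lsc_envelope h x \<le> h y + ennreal (c * dist x y)"
    using lsc_envelope_le assms(1) by (rule order_trans)
  also have "\<dots> \<le> (lsc_envelope h z + ennreal (e / 2)) + (ennreal (c * dist x z) + ennreal (e / 2))"
    using y(2) dist_le by (intro add_mono) auto
  also have "\<dots> = lsc_envelope h z + ennreal (c * dist x z) + ennreal e"
    using \<open>0 < e\<close> by (simp add: ac_simps flip: ennreal_plus)
  finally show "lsc_envelope h x \<le> lsc_envelope h z + ennreal (c * dist x z) + ennreal e" .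
qed

definition admissible_path :: "('a \<Rightarrow> ennreal) \<Rightarrow> 'a \<Rightarrow> (nat \<Rightarrow> 'a) \<Rightarrow> bool" where
  "admissible_path l x s \<longleftrightarrow> s 0 = x \<and> (\<lambda>n. l (s n)) \<longlonglongrightarrow> 0"

definition path_cost :: "('a::metric_space \<Rightarrow> ennreal) \<Rightarrow> (nat \<Rightarrow> 'a) \<Rightarrow> ennreal" where
  "path_cost l s = (\<Sum>n. l (s n) * ennreal (dist (s n) (s (Suc n))))"

definition path_value :: "('a::metric_space \<Rightarrow> ennreal) \<Rightarrow> 'a \<Rightarrow> ennreal" where
  "path_value l x = (INF s\<in>{s. admissible_path l x s}. path_cost l s)"

lemma path_cost_shift:
  "path_cost l s = path_cost l (\<lambda>j. s (j + k)) + (\<Sum>j<k. l (s j) * ennreal (dist (s j) (s (Suc j))))"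
  unfolding path_cost_def by (subst suminf_offset[OF summableI, of _ k]) simp

lemma admissible_path_shift: "admissible_path l x s \<Longrightarrow> admissible_path l (s k) (\<lambda>j. s (j + k))"
  unfolding admissible_path_def using LIMSEQ_ignore_initial_segment[of "\<lambda>n. l (s n)" 0 k] by simp

lemma path_value_le_cost: "admissible_path l x s \<Longrightarrow> path_value l x \<le> path_cost l s"
  unfolding path_value_def by (rule INF_lower) simp

lemma path_value_prepend: "path_value l x \<le> l x * ennreal (dist x y) + path_value l y"
proof (rule ennreal_le_epsilon)
  fix e :: real
  assume "l x * ennreal (dist x y) + path_value l y < top" "0 < e"
  then have "path_value l y \<noteq> \<infinity>"
    by auto
  then obtain s where s: "admissible_path l y s" "path_cost l s < path_value l y + ennreal e"
    using INF_approx_ennreal[OF \<open>0 < e\<close> path_value_def] by auto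
  define s' where "s' = case_nat x s"
  have "admissible_path l x s'"
    using s(1) LIMSEQ_imp_Suc[of "\<lambda>n. l (s' n)"] by (simp add: admissible_path_def s'_def)
  then have "path_value l x \<le> path_cost l s'"
    by (rule path_value_le_cost)
  also have "\<dots> = path_cost l s + l x * ennreal (dist x y)"
    using path_cost_shift[of l s' 1] s(1) by (simp add: s'_def admissible_path_def)
  also have "\<dots> \<le> (path_value l y + ennreal e) + l x * ennreal (dist x y)"
    using s(2) by (intro add_right_mono) simp
  also have "\<dots> = l x * ennreal (dist x y) + path_value l y + ennreal e"
    by (simp add: ac_simps)
  finally show "path_value l x \<le> l x * ennreal (dist x y) + path_value l y + ennreal e" .
qed

lemma dist_le_sum_dist_Suc:
  fixes s :: "nat \<Rightarrow> 'a::metric_space"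
  shows "dist (s 0) (s n) \<le> (\<Sum>k<n. dist (s k) (s (Suc k)))"
proof (induction n)
  case (Suc n)
  then show ?case
    using dist_triangle[of "s 0" "s (Suc n)" "s n"] by simp
qed simp

lemma path_value_exit:
  assumes "admissible_path l y s" "0 < c"
  obtains k where "l (s k) < ennreal c"
    and "path_value l (s k) + ennreal (c * dist y (s k)) \<le> path_cost l s"
proof -
  have "\<forall>\<^sub>F n in sequentially. l (s n) < ennreal c"
    using assms unfolding admissible_path_def by (intro order_tendstoD(2)) auto
  then have ex: "\<exists>k. l (s k) < ennreal c"
    by (auto simp: eventually_sequentially)
  define k where "k = (LEAST k. l (s k) < ennreal c)"
  have k: "l (s k) < ennreal c"
    unfolding k_def using ex by (rule LeastI_ex)
  have before: "ennreal c \<le> l (s j)" if "j < k" for j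
    using not_less_Least[of j "\<lambda>k. l (s k) < ennreal c"] that by (simp add: k_def not_less)
  have "ennreal (c * dist y (s k)) \<le> ennreal (c * (\<Sum>j<k. dist (s j) (s (Suc j))))"
    using dist_le_sum_dist_Suc[of s k] assms
    by (intro ennreal_leI mult_left_mono) (auto simp: admissible_path_def)
  also have "\<dots> = (\<Sum>j<k. ennreal c * ennreal (dist (s j) (s (Suc j))))"
    using assms(2) by (simp add: sum_distrib_left ennreal_mult flip: sum_ennreal)
  also have "\<dots> \<le> (\<Sum>j<k. l (s j) * ennreal (dist (s j) (s (Suc j))))"
    using before by (intro sum_mono mult_right_mono) auto
  finally have "path_value l (s k) + ennreal (c * dist y (s k))
      \<le> path_cost l (\<lambda>j. s (j + k)) + (\<Sum>j<k. l (s j) * ennreal (dist (s j) (s (Suc j))))"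
    using path_value_le_cost[OF admissible_path_shift[OF assms(1)], of k] by (rule add_mono[rotated])
  with k show thesis
    using that path_cost_shift[of l s k] by simp
qed

lemma ennreal_suminf_tail_less:
  fixes f :: "nat \<Rightarrow> ennreal"
  assumes "(\<Sum>n. f n) \<noteq> \<infinity>" "0 < e"
  obtains k where "(\<Sum>i. f (i + k)) < ennreal e"
proof -
  define c where "c n = enn2real (f n)" for n
  have f_eq: "f n = ennreal (c n)" for n
    using ennreal_suminf_lessD[of f top n] assms(1) by (simp add: c_def less_top ennreal_enn2real_if)
  have c_nonneg: "0 \<le> c n" for n
    by (simp add: c_def)
  have "summable c"
    using assms(1) c_nonneg by (intro summable_suminf_not_top) (auto simp: f_eq)
  then obtain k where "norm (\<Sum>i. c (i + k)) < e"
    using suminf_exist_split[OF assms(2)] by blast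
  then have "ennreal (\<Sum>i. c (i + k)) < ennreal e"
    using assms(2) by (intro ennreal_lessI) (auto simp: abs_less_iff)
  moreover have "(\<Sum>i. f (i + k)) = ennreal (\<Sum>i. c (i + k))"
    unfolding f_eq using c_nonneg summable_ignore_initial_segment[OF \<open>summable c\<close>]
    by (intro suminf_ennreal2) auto
  ultimately have "(\<Sum>i. f (i + k)) < ennreal e"
    by simp
  then show thesis
    by (rule that)
qed

lemma H0_obtains_path_values:
  fixes l :: "'a::metric_space \<Rightarrow> ennreal"
  assumes "H0 l"
  obtains xb :: "nat \<Rightarrow> 'a" where "path_value l (xb 0) \<noteq> \<infinity>"
    and "\<And>e. 0 < e \<Longrightarrow> \<exists>k. path_value l (xb k) < ennreal e"
proof -
  obtain xb where cost: "(\<Sum>n. l (xb n) * ennreal (dist (xb n) (xb (Suc n)))) \<noteq> \<infinity>"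
    and lim: "(\<lambda>n. l (xb n)) \<longlonglongrightarrow> 0"
    using assms unfolding H0_def by (auto simp: less_top)
  have tail: "path_value l (xb k) \<le> (\<Sum>i. l (xb (i + k)) * ennreal (dist (xb (i + k)) (xb (Suc (i + k)))))"
    for k
  proof -
    have "admissible_path l (xb k) (\<lambda>j. xb (j + k))"
      using admissible_path_shift[of l "xb 0" xb k] lim by (simp add: admissible_path_def)
    then have "path_value l (xb k) \<le> path_cost l (\<lambda>j. xb (j + k))"
      by (rule path_value_le_cost)
    then show ?thesis
      by (simp add: path_cost_def)
  qed
  have "path_value l (xb 0) \<noteq> \<infinity>"
    using neq_top_trans[OF _ tail[of 0]] cost by simp
  moreover have "\<exists>k. path_value l (xb k) < ennreal e" if "0 < e" for e
  proof -
    obtain k where "(\<Sum>i. l (xb (i + k)) * ennreal (dist (xb (i + k)) (xb (Suc (i + k))))) < ennreal e"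
      using ennreal_suminf_tail_less[OF cost \<open>0 < e\<close>] by blast
    then show ?thesis
      using tail[of k] by (blast intro: le_less_trans)
  qed
  ultimately show thesis
    using that by blast
qed

lemma path_value_finite:
  fixes l :: "'a::metric_space \<Rightarrow> ennreal"
  assumes "H0 l" "l x \<noteq> \<infinity>"
  shows "path_value l x \<noteq> \<infinity>"
proof -
  obtain xb :: "nat \<Rightarrow> 'a" where "path_value l (xb 0) \<noteq> \<infinity>"
    using H0_obtains_path_values[OF assms(1)] by blast
  moreover have "l x * ennreal (dist x (xb 0)) \<noteq> \<infinity>"
    using assms(2) by (simp add: ennreal_mult_eq_top_iff)
  ultimately have "l x * ennreal (dist x (xb 0)) + path_value l (xb 0) \<noteq> top"
    by simp
  then show ?thesis
    using neq_top_trans[OF _ path_value_prepend[of l x "xb 0"]] by simp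
qed

lemma INF_lsc_envelope_path_value:
  fixes l :: "'a::metric_space \<Rightarrow> ennreal"
  assumes "H0 l"
  shows "(INF x. lsc_envelope (path_value l) x) = 0"
proof -
  obtain xb :: "nat \<Rightarrow> 'a" where small: "\<And>e. 0 < e \<Longrightarrow> \<exists>k. path_value l (xb k) < ennreal e"
    using H0_obtains_path_values[OF assms] by blast
  have "(INF x. lsc_envelope (path_value l) x) \<le> 0"
  proof (rule ennreal_le_epsilon)
    fix e :: real assume "0 < e"
    then obtain k where "path_value l (xb k) < ennreal e"
      using small by blast
    then have "lsc_envelope (path_value l) (xb k) \<le> ennreal e"
      using lsc_envelope_le[of "path_value l" "xb k"] by (meson le_less_trans less_imp_le)
    then show "(INF x. lsc_envelope (path_value l) x) \<le> 0 + ennreal e"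
      using INF_lower2[OF UNIV_I, of "lsc_envelope (path_value l)"] by simp
  qed
  then show ?thesis
    by (rule antisym) simp
qed

lemma proper_lsc_envelope_path_value:
  fixes l :: "'a::metric_space \<Rightarrow> ennreal"
  assumes "H0 l"
  shows "proper (lsc_envelope (path_value l))"
proof -
  obtain xb :: "nat \<Rightarrow> 'a" where "path_value l (xb 0) \<noteq> \<infinity>"
    using H0_obtains_path_values[OF assms] by blast
  then have "lsc_envelope (path_value l) (xb 0) \<noteq> \<infinity>"
    using neq_top_trans[OF _ lsc_envelope_le[of "path_value l" "xb 0"]] by simp
  then show ?thesis
    unfolding proper_def by blast
qed

lemma global_slope_lsc_envelope_path_value_le:
  assumes "H0 l"
  shows "global_slope (lsc_envelope (path_value l)) x \<le> l x"
proof (cases "l x")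
  case (real c)
  have "path_value l x \<noteq> \<infinity>"
    using path_value_finite[OF assms] real by simp
  then have "lsc_envelope (path_value l) x \<noteq> \<infinity>"
    using neq_top_trans[OF _ lsc_envelope_le[of "path_value l" x]] by simp
  moreover have "path_value l x \<le> path_value l y + ennreal (c * dist x y)" for y
  proof -
    have "path_value l x \<le> l x * ennreal (dist x y) + path_value l y"
      by (rule path_value_prepend)
    also have "\<dots> = path_value l y + ennreal (c * dist x y)"
      using real by (simp add: ennreal_mult add.commute)
    finally show ?thesis .
  qed
  then have "lsc_envelope (path_value l) x
      \<le> lsc_envelope (path_value l) y + ennreal (c * dist x y)" for y
    using real(1) by (rule lsc_envelope_le_add_dist)
  ultimately show ?thesis
    using global_slope_le_iff[of "lsc_envelope (path_value l)" x c] real by simp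
qed simp

lemma lsc_envelope_path_value_less:
  assumes "lsc_envelope (path_value l) x < a" "0 < r"
  obtains y s where "dist x y < r" "admissible_path l y s" "path_cost l s < a"
proof -
  have "(INF y\<in>ball x r. path_value l y) < a"
    using INF_ball_le_lsc_envelope[OF assms(2)] assms(1) by (rule le_less_trans)
  then obtain y where "dist x y < r" "path_value l y < a"
    by (auto simp: INF_less_iff)
  moreover from this(2) obtain s where "admissible_path l y s" "path_cost l s < a"
    unfolding path_value_def by (auto simp: INF_less_iff)
  ultimately show thesis
    using that by blast
qed

lemma lsc_envelope_path_value_exit:
  assumes "lsc_envelope (path_value l) x < a" "0 < r" "0 < c"
  obtains y z where "dist x y < r" "l z < ennreal c"
    and "lsc_envelope (path_value l) z + ennreal (c * dist y z) < a"
proof -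
  obtain y s where "dist x y < r" and s: "admissible_path l y s" "path_cost l s < a"
    using lsc_envelope_path_value_less[OF assms(1,2)] by blast
  moreover obtain k where "l (s k) < ennreal c"
    and exit: "path_value l (s k) + ennreal (c * dist y (s k)) \<le> path_cost l s"
    using path_value_exit[OF s(1) assms(3)] by blast
  moreover have "lsc_envelope (path_value l) (s k) + ennreal (c * dist y (s k)) < a"
    using add_right_mono[OF lsc_envelope_le[of "path_value l" "s k"]] exit s(2)
    by (meson le_less_trans order_trans)
  ultimately show thesis
    using that by blast
qed

lemma lsc_less_near:
  assumes "lsc l" "c < l x"
  obtains \<rho> where "0 < \<rho>" "\<And>w. dist x w < \<rho> \<Longrightarrow> c < l w"
proof -
  have "open (- {w. l w \<le> c})"
    using assms(1) unfolding lsc_def by blast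
  moreover have "x \<in> - {w. l w \<le> c}"
    using assms(2) by simp
  ultimately obtain \<rho> where "0 < \<rho>" "ball x \<rho> \<subseteq> - {w. l w \<le> c}"
    by (meson open_contains_ball)
  then show thesis
    using that by (auto simp: subset_iff not_le)
qed

text \<open>The exit point \<open>z\<close> lies outside the ball of radius \<open>\<rho>\<close> around \<open>x\<close> on which \<open>l > c2\<close>;
  \<open>\<eta>\<close> and \<open>e\<close> are chosen so that the slack \<open>c2 * \<eta> + e\<close> is covered by \<open>(c2 - c1) * \<rho>\<close>.\<close>

lemma global_slope_lsc_envelope_path_value_ge_real:
  assumes "lsc l" "lsc_envelope (path_value l) x = ennreal ux" "0 \<le> ux"
    and "0 \<le> c1" "c1 < c2" "ennreal c2 < l x"
  shows "ennreal c1 \<le> global_slope (lsc_envelope (path_value l)) x"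
proof -
  let ?U = "lsc_envelope (path_value l)"
  have "0 < c2"
    using assms(4,5) by linarith
  obtain \<rho> where "0 < \<rho>" and above: "\<And>w. dist x w < \<rho> \<Longrightarrow> ennreal c2 < l w"
    using lsc_less_near[OF assms(1,6)] by blast
  define \<eta> where "\<eta> = (c2 - c1) * \<rho> / (2 * c2)"
  define e where "e = (c2 - c1) * \<rho> / 2"
  have "0 < \<eta>" "0 < e"
    using \<open>0 < c2\<close> \<open>0 < \<rho>\<close> assms(5) by (auto simp: \<eta>_def e_def)
  have budget: "c2 * \<eta> + e = c2 * \<rho> - c1 * \<rho>"
    using \<open>0 < c2\<close> by (simp add: \<eta>_def e_def field_simps)
  obtain y z where y: "dist x y < \<eta>" and "l z < ennreal c2"
    and z: "?U z + ennreal (c2 * dist y z) < ennreal (ux + e)"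
    using lsc_envelope_path_value_exit[of l x "ennreal (ux + e)" \<eta> c2] assms(2,3)
      \<open>0 < e\<close> \<open>0 < \<eta>\<close> \<open>0 < c2\<close> by (auto simp: ennreal_lessI)
  then have far: "\<rho> \<le> dist x z"
    using above[of z] by (meson not_le order.asym)
  obtain uz where uz: "?U z = ennreal uz" "0 \<le> uz" "uz + c2 * dist y z < ux + e"
    using z \<open>0 < c2\<close> by (cases "?U z") (auto simp: ennreal_add_less_iff)
  have "c1 * dist x z \<le> ux - uz"
  proof -
    have "c2 * dist x z \<le> c2 * dist x y + c2 * dist y z"
      using mult_left_mono[OF dist_triangle[of x z y], of c2] \<open>0 < c2\<close> by (simp add: distrib_left)
    moreover have "c2 * dist x y \<le> c2 * \<eta>"
      using y \<open>0 < c2\<close> by simp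
    moreover have "(c2 - c1) * \<rho> \<le> (c2 - c1) * dist x z"
      using far assms(5) by (intro mult_left_mono) auto
    ultimately show ?thesis
      using budget uz(3) by (simp add: left_diff_distrib)
  qed
  moreover have "z \<noteq> x"
    using far \<open>0 < \<rho>\<close> by auto
  ultimately show ?thesis
    using global_slope_ge[of ?U x ux z uz c1] assms(2,3,4) uz(1,2) by simp
qed

lemma global_slope_lsc_envelope_path_value_ge:
  assumes "lsc l"
  shows "l x \<le> global_slope (lsc_envelope (path_value l)) x"
proof (cases "lsc_envelope (path_value l) x")
  case (real ux)
  show ?thesis
  proof (rule dense_le)
    fix c assume "c < l x"
    then obtain c' where "c < c'" "c' < l x"
      using dense by blast
    moreover obtain c1 where "c = ennreal c1" "0 \<le> c1"
      using \<open>c < l x\<close> by (cases c) auto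
    moreover obtain c2 where "c' = ennreal c2"
      using \<open>c' < l x\<close> by (cases c') auto
    ultimately show "c \<le> global_slope (lsc_envelope (path_value l)) x"
      using global_slope_lsc_envelope_path_value_ge_real[OF assms real(2,1), of c1 c2]
      by (auto simp: ennreal_less_iff)
  qed
qed (simp add: global_slope_top)

theorem corollary6p14:
  fixes l :: "'a::complete_space \<Rightarrow> ennreal"
  assumes "lsc l"
    and "(INF x. l x) = 0"
    and "H0 l"
  shows "\<exists>!u :: 'a \<Rightarrow> ennreal. proper u \<and> lsc u \<and> (INF x. u x) = 0 \<and>
           (\<forall>x. global_slope u x = l x)"
proof (rule ex1I[of _ "lsc_envelope (path_value l)"])
  let ?U = "lsc_envelope (path_value l)"
  have slope: "global_slope ?U x = l x" for x
    using global_slope_lsc_envelope_path_value_le[OF assms(3)]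
      global_slope_lsc_envelope_path_value_ge[OF assms(1)] by (rule order_antisym)
  show "proper ?U \<and> lsc ?U \<and> (INF x. ?U x) = 0 \<and> (\<forall>x. global_slope ?U x = l x)"
    using proper_lsc_envelope_path_value[OF assms(3)] lsc_lsc_envelope
      INF_lsc_envelope_path_value[OF assms(3)] slope by blast
  fix v
  assume "proper v \<and> lsc v \<and> (INF x. v x) = 0 \<and> (\<forall>x. global_slope v x = l x)"
  then show "v = ?U"
    using lsc_lsc_envelope INF_lsc_envelope_path_value[OF assms(3)] slope
    by (intro slope_determines_function) auto
qed

end
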